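(* Let $n\ge 3$ and let $\beta\in B_n(D)$ be such that $\pi(\beta)$ is a transposition. Then the subgroup $H_\beta=\langle P_n(D),\beta\rangle$ of $B_n(D)$ is not bi-orderable.
   Context: $B_n(D)$ is the Artin braid group on $n$ strands, with generators $\sigma_1,\dots,\sigma_{n-1}$ and relations $\sigma_i\sigma_j=\sigma_j\sigma_i$ for $|i-j|\ge 2$ and $\sigma_i\sigma_{i+1}\sigma_i=\sigma_{i+1}\sigma_i\sigma_{i+1}$. The permutation homomorphism $\pi: B_n(D)\to S_n$ is given by $\pi(\sigma_i)=(i,i+1)$, and $P_n(D)=\ker\pi$. $H_\beta=\langle P_n(D),\beta\rangle$ is the subgroup generated by $P_n(D)$ and $\beta$. A group is bi-orderable if it admits a strict total ordering invariant under both left and right multiplication. *)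

theory Defs
  imports "HOL-Algebra.Generated_Groups" "HOL-Combinatorics.Transposition"
begin

text \<open>Braid words: a letter (i, True) stands for sigma_i, (i, False) for sigma_i inverse.
  A word is valid for B_n if all indices lie in 1..n-1.\<close>

type_synonym bword = "(nat \<times> bool) list"

definition valid_word :: "nat \<Rightarrow> bword \<Rightarrow> bool" where
  "valid_word n w \<longleftrightarrow> (\<forall>(i,b)\<in>set w. 1 \<le> i \<and> i \<le> n - 1)"

inductive beq :: "nat \<Rightarrow> bword \<Rightarrow> bword \<Rightarrow> bool" for n where
  beq_refl: "beq n w w"
| beq_sym: "beq n u v \<Longrightarrow> beq n v u"
| beq_trans: "beq n u v \<Longrightarrow> beq n v w \<Longrightarrow> beq n u w"
| beq_ctxt: "beq n u v \<Longrightarrow> valid_word n a \<Longrightarrow> valid_word n c \<Longrightarrow> beq n (a @ u @ c) (a @ v @ c)"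
| beq_cancel: "1 \<le> i \<Longrightarrow> i \<le> n - 1 \<Longrightarrow> beq n [(i, b), (i, \<not> b)] []"
| beq_comm: "1 \<le> i \<Longrightarrow> i \<le> n - 1 \<Longrightarrow> 1 \<le> j \<Longrightarrow> j \<le> n - 1 \<Longrightarrow> i + 2 \<le> j \<Longrightarrow>
     beq n [(i, True), (j, True)] [(j, True), (i, True)]"
| beq_braid: "1 \<le> i \<Longrightarrow> i + 1 \<le> n - 1 \<Longrightarrow>
     beq n [(i, True), (i+1, True), (i, True)] [(i+1, True), (i, True), (i+1, True)]"

definition braid_rel :: "nat \<Rightarrow> (bword \<times> bword) set" where
  "braid_rel n = {(u, v). valid_word n u \<and> valid_word n v \<and> beq n u v}"

definition braid_group :: "nat \<Rightarrow> bword set monoid" where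
  "braid_group n = \<lparr> carrier = {w. valid_word n w} // braid_rel n,
     mult = (\<lambda>X Y. braid_rel n `` {(SOME x. x \<in> X) @ (SOME y. y \<in> Y)}),
     one = braid_rel n `` {[]} \<rparr>"

fun word_perm :: "bword \<Rightarrow> nat \<Rightarrow> nat" where
  "word_perm [] = id"
| "word_perm ((i, b) # w) = transpose i (i + 1) \<circ> word_perm w"

definition braid_perm :: "bword set \<Rightarrow> nat \<Rightarrow> nat" where
  "braid_perm X = word_perm (SOME x. x \<in> X)"

definition pure_braids :: "nat \<Rightarrow> bword set set" where
  "pure_braids n = {X \<in> carrier (braid_group n). braid_perm X = id}"

definition is_transposition :: "nat \<Rightarrow> (nat \<Rightarrow> nat) \<Rightarrow> bool" where
  "is_transposition n p \<longleftrightarrow> (\<exists>i j. i \<in> {1..n} \<and> j \<in> {1..n} \<and> i \<noteq> j \<and> p = transpose i j)"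

definition bi_orderable :: "('a, 'b) monoid_scheme \<Rightarrow> bool" where
  "bi_orderable G \<longleftrightarrow> (\<exists>r :: 'a \<Rightarrow> 'a \<Rightarrow> bool.
     (\<forall>x\<in>carrier G. \<not> r x x) \<and>
     (\<forall>x\<in>carrier G. \<forall>y\<in>carrier G. \<forall>z\<in>carrier G. r x y \<and> r y z \<longrightarrow> r x z) \<and>
     (\<forall>x\<in>carrier G. \<forall>y\<in>carrier G. x \<noteq> y \<longrightarrow> r x y \<or> r y x) \<and>
     (\<forall>x\<in>carrier G. \<forall>y\<in>carrier G. \<forall>z\<in>carrier G.
         r x y \<longrightarrow> r (z \<otimes>\<^bsub>G\<^esub> x) (z \<otimes>\<^bsub>G\<^esub> y) \<and> r (x \<otimes>\<^bsub>G\<^esub> z) (y \<otimes>\<^bsub>G\<^esub> z)))"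

end

theory Submission
  imports Defs
begin

(* In a bi-ordered group, if x^2 commutes with y then so does x: from xy < yx one gets
   x(xy) < x(yx) = (xy)x < (yx)x, contradicting x(xy) = (yx)x.
   Choose a braid gamma whose permutation carries the adjacent transposition (k k+1) to the
   transposition of beta. Then x = gamma sigma_k sigma_(k+1)^2 gamma^-1 has the same permutation
   as beta, so it lies in H_beta, and y = gamma sigma_(k+1)^2 gamma^-1 is pure. Now
   (sigma_k sigma_(k+1)^2)^2 = (sigma_k sigma_(k+1))^3 is the full twist of the strands k, k+1, k+2,
   which commutes with sigma_(k+1); so x^2 commutes with y, while x and y do not commute, as the
   linking number of the strands k+1 and k+2 detects. *)

lemma valid_word_Nil [simp]: "valid_word n []"
  unfolding valid_word_def by simp

lemma valid_word_Cons [simp]: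
  "valid_word n ((i, e) # w) \<longleftrightarrow> 1 \<le> i \<and> i \<le> n - 1 \<and> valid_word n w"
  unfolding valid_word_def by auto

lemma valid_word_append [simp]: "valid_word n (u @ v) \<longleftrightarrow> valid_word n u \<and> valid_word n v"
  unfolding valid_word_def by auto

fun word_inv :: "bword \<Rightarrow> bword" where
  "word_inv [] = []"
| "word_inv ((i, e) # w) = word_inv w @ [(i, \<not> e)]"

lemma valid_word_inv [simp]: "valid_word n (word_inv w) \<longleftrightarrow> valid_word n w"
  by (induction w rule: word_inv.induct) auto

lemma word_perm_append: "word_perm (u @ v) = word_perm u \<circ> word_perm v"
  by (induction u rule: word_perm.induct) auto

text \<open>The signed number of crossings, in a braid word, between the two strands that end at
  positions a and b.\<close>

definition letter_linking :: "nat \<Rightarrow> bool \<Rightarrow> nat \<Rightarrow> nat \<Rightarrow> int" where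
  "letter_linking i e a b =
     (if (a = i \<and> b = i + 1) \<or> (a = i + 1 \<and> b = i) then (if e then 1 else -1) else 0)"

fun linking_number :: "bword \<Rightarrow> nat \<Rightarrow> nat \<Rightarrow> int" where
  "linking_number [] a b = 0"
| "linking_number ((i, e) # w) a b =
     linking_number w a b + letter_linking i e (word_perm w a) (word_perm w b)"

lemma linking_number_append:
  "linking_number (u @ v) a b =
     linking_number v a b + linking_number u (word_perm v a) (word_perm v b)"
  by (induction u arbitrary: a b rule: word_perm.induct) (auto simp: word_perm_append)

lemma beq_imp_word_perm_linking_number_eq:
  assumes "beq n u v"
  shows "word_perm u = word_perm v \<and> linking_number u = linking_number v"
  using assms
proof (induction rule: beq.induct)
  case (beq_ctxt u v a c)
  then show ?case by (auto simp: word_perm_append linking_number_append fun_eq_iff)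
qed (auto simp: fun_eq_iff letter_linking_def transpose_def)

declare beq_trans [trans]

lemma beq_append:
  assumes "beq n u u'" "beq n v v'" "valid_word n u'" "valid_word n v"
  shows "beq n (u @ v) (u' @ v')"
proof -
  have "beq n ([] @ u @ v) ([] @ u' @ v)"
    using assms by (intro beq_ctxt) auto
  moreover have "beq n (u' @ v @ []) (u' @ v' @ [])"
    using assms by (intro beq_ctxt) auto
  ultimately show ?thesis by (auto intro: beq_trans)
qed

lemma beq_in_context:
  assumes "beq n u v" "valid_word n a" "valid_word n c" "x = a @ u @ c" "y = a @ v @ c"
  shows "beq n x y"
  using assms beq_ctxt by blast

lemma beq_word_inv_append: "valid_word n w \<Longrightarrow> beq n (word_inv w @ w) []"
proof (induction w rule: word_inv.induct)
  case (2 i e w)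
  have "beq n [(i, \<not> e), (i, \<not> \<not> e)] []"
    using 2 by (intro beq_cancel) auto
  then have "beq n (word_inv w @ [(i, \<not> e), (i, e)] @ w) (word_inv w @ [] @ w)"
    using 2 by (intro beq_ctxt) auto
  then show ?case using 2 by (auto intro: beq_trans)
qed (auto intro: beq_refl)

definition braid_class :: "nat \<Rightarrow> bword \<Rightarrow> bword set" where
  "braid_class n w = braid_rel n `` {w}"

lemma mem_braid_class_iff:
  "x \<in> braid_class n w \<longleftrightarrow> valid_word n w \<and> valid_word n x \<and> beq n w x"
  unfolding braid_class_def braid_rel_def by auto

lemma braid_class_eq_iff:
  assumes "valid_word n u" "valid_word n v"
  shows "braid_class n u = braid_class n v \<longleftrightarrow> beq n u v"
proof
  assume "braid_class n u = braid_class n v"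
  moreover have "u \<in> braid_class n u"
    using assms by (simp add: mem_braid_class_iff beq_refl)
  ultimately show "beq n u v"
    by (auto simp: mem_braid_class_iff intro: beq_sym)
next
  assume "beq n u v"
  then show "braid_class n u = braid_class n v"
    using assms by (auto simp: mem_braid_class_iff) (meson beq_sym beq_trans)+
qed

lemma braid_class_in_carrier: "valid_word n w \<Longrightarrow> braid_class n w \<in> carrier (braid_group n)"
  unfolding braid_group_def braid_class_def by (auto intro: quotientI)

lemma carrier_braid_groupE:
  assumes "X \<in> carrier (braid_group n)"
  obtains w where "valid_word n w" "X = braid_class n w"
  using assms unfolding braid_group_def braid_class_def by (auto elim: quotientE)

lemma some_in_braid_class:
  assumes "valid_word n w"
  shows "valid_word n (SOME x. x \<in> braid_class n w) \<and> beq n w (SOME x. x \<in> braid_class n w)"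
proof -
  have "w \<in> braid_class n w"
    using assms by (simp add: mem_braid_class_iff beq_refl)
  then have "(SOME x. x \<in> braid_class n w) \<in> braid_class n w"
    by (rule someI)
  then show ?thesis by (subst (asm) mem_braid_class_iff) blast
qed

lemma braid_class_mult:
  assumes "valid_word n u" "valid_word n v"
  shows "braid_class n u \<otimes>\<^bsub>braid_group n\<^esub> braid_class n v = braid_class n (u @ v)"
proof -
  let ?u = "SOME x. x \<in> braid_class n u" and ?v = "SOME y. y \<in> braid_class n v"
  have "beq n (?u @ ?v) (u @ v)"
    using some_in_braid_class[OF assms(1)] some_in_braid_class[OF assms(2)] assms
    by (intro beq_append) (auto intro: beq_sym)
  then have "braid_class n (?u @ ?v) = braid_class n (u @ v)"
    using some_in_braid_class[OF assms(1)] some_in_braid_class[OF assms(2)] assms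
    by (subst braid_class_eq_iff) auto
  then show ?thesis
    unfolding braid_group_def by (simp add: braid_class_def)
qed

lemma one_braid_group: "\<one>\<^bsub>braid_group n\<^esub> = braid_class n []"
  unfolding braid_group_def braid_class_def by simp

lemma braid_perm_class: "valid_word n w \<Longrightarrow> braid_perm (braid_class n w) = word_perm w"
  unfolding braid_perm_def using some_in_braid_class beq_imp_word_perm_linking_number_eq by metis

theorem group_braid_group: "group (braid_group n)"
proof (rule groupI)
  fix X Y Z
  assume "X \<in> carrier (braid_group n)" "Y \<in> carrier (braid_group n)" "Z \<in> carrier (braid_group n)"
  then obtain x y z where xyz: "valid_word n x" "valid_word n y" "valid_word n z"
    and "X = braid_class n x" "Y = braid_class n y" "Z = braid_class n z"
    by (metis carrier_braid_groupE)
  then show "X \<otimes>\<^bsub>braid_group n\<^esub> Y \<in> carrier (braid_group n)"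
    and "X \<otimes>\<^bsub>braid_group n\<^esub> Y \<otimes>\<^bsub>braid_group n\<^esub> Z =
           X \<otimes>\<^bsub>braid_group n\<^esub> (Y \<otimes>\<^bsub>braid_group n\<^esub> Z)"
    and "\<one>\<^bsub>braid_group n\<^esub> \<otimes>\<^bsub>braid_group n\<^esub> X = X"
    by (simp_all add: braid_class_mult braid_class_in_carrier one_braid_group)
  have "braid_class n (word_inv x) \<otimes>\<^bsub>braid_group n\<^esub> X = \<one>\<^bsub>braid_group n\<^esub>"
    using xyz \<open>X = braid_class n x\<close> beq_word_inv_append[OF xyz(1)]
    by (simp add: braid_class_mult one_braid_group braid_class_eq_iff)
  then show "\<exists>W\<in>carrier (braid_group n). W \<otimes>\<^bsub>braid_group n\<^esub> X = \<one>\<^bsub>braid_group n\<^esub>"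
    using xyz(1) by (metis braid_class_in_carrier valid_word_inv)
qed (simp add: one_braid_group braid_class_in_carrier)

lemma braid_perm_mult:
  assumes "X \<in> carrier (braid_group n)" "Y \<in> carrier (braid_group n)"
  shows "braid_perm (X \<otimes>\<^bsub>braid_group n\<^esub> Y) = braid_perm X \<circ> braid_perm Y"
  using assms
  by (elim carrier_braid_groupE) (simp add: braid_class_mult braid_perm_class word_perm_append)

lemma braid_perm_one: "braid_perm \<one>\<^bsub>braid_group n\<^esub> = id"
  by (simp add: one_braid_group braid_perm_class)

lemma braid_perm_inv:
  assumes "\<gamma> \<in> carrier (braid_group n)"
  shows "braid_perm \<gamma> \<circ> braid_perm (inv\<^bsub>braid_group n\<^esub> \<gamma>) = id"
    and "braid_perm (inv\<^bsub>braid_group n\<^esub> \<gamma>) \<circ> braid_perm \<gamma> = id"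
proof -
  interpret group "braid_group n" by (rule group_braid_group)
  show "braid_perm \<gamma> \<circ> braid_perm (inv\<^bsub>braid_group n\<^esub> \<gamma>) = id"
    using braid_perm_mult[of \<gamma> n "inv\<^bsub>braid_group n\<^esub> \<gamma>"] assms by (simp add: braid_perm_one)
  show "braid_perm (inv\<^bsub>braid_group n\<^esub> \<gamma>) \<circ> braid_perm \<gamma> = id"
    using braid_perm_mult[of "inv\<^bsub>braid_group n\<^esub> \<gamma>" n \<gamma>] assms by (simp add: braid_perm_one)
qed

lemma braid_perm_conj:
  assumes "\<gamma> \<in> carrier (braid_group n)" "X \<in> carrier (braid_group n)"
  shows "braid_perm (\<gamma> \<otimes>\<^bsub>braid_group n\<^esub> X \<otimes>\<^bsub>braid_group n\<^esub> inv\<^bsub>braid_group n\<^esub> \<gamma>) =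
           braid_perm \<gamma> \<circ> braid_perm X \<circ> braid_perm (inv\<^bsub>braid_group n\<^esub> \<gamma>)"
proof -
  interpret group "braid_group n" by (rule group_braid_group)
  have "\<gamma> \<otimes>\<^bsub>braid_group n\<^esub> X \<in> carrier (braid_group n)" "inv\<^bsub>braid_group n\<^esub> \<gamma> \<in> carrier (braid_group n)"
    by (rule m_closed[OF assms], rule inv_closed[OF assms(1)])
  then show ?thesis
    using assms by (simp only: braid_perm_mult)
qed

lemma comp_transpose_comp_inverse:
  fixes f g :: "'a \<Rightarrow> 'a"
  assumes "f \<circ> g = id" "g \<circ> f = id"
  shows "f \<circ> transpose a b \<circ> g = transpose (f a) (f b)"
proof
  fix x
  have "f (g y) = y" and "g (f y) = y" for y
    using assms by (metis comp_apply id_apply)+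
  then show "(f \<circ> transpose a b \<circ> g) x = transpose (f a) (f b) x"
    unfolding transpose_def by auto
qed

lemma braid_perm_conj_transpose:
  assumes "\<gamma> \<in> carrier (braid_group n)" "X \<in> carrier (braid_group n)" "braid_perm X = transpose a b"
  shows "braid_perm (\<gamma> \<otimes>\<^bsub>braid_group n\<^esub> X \<otimes>\<^bsub>braid_group n\<^esub> inv\<^bsub>braid_group n\<^esub> \<gamma>) =
           transpose (braid_perm \<gamma> a) (braid_perm \<gamma> b)"
  unfolding braid_perm_conj[OF assms(1,2)] assms(3)
  by (rule comp_transpose_comp_inverse[OF braid_perm_inv[OF assms(1)]])

lemma braid_perm_conj_id:
  assumes "\<gamma> \<in> carrier (braid_group n)" "X \<in> carrier (braid_group n)" "braid_perm X = id"
  shows "braid_perm (\<gamma> \<otimes>\<^bsub>braid_group n\<^esub> X \<otimes>\<^bsub>braid_group n\<^esub> inv\<^bsub>braid_group n\<^esub> \<gamma>) = id"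
  unfolding braid_perm_conj[OF assms(1,2)] assms(3)
  using braid_perm_inv(1)[OF assms(1)] by simp

lemma mem_generate_of_braid_perm_eq:
  assumes "\<beta> \<in> carrier (braid_group n)" "X \<in> carrier (braid_group n)" "braid_perm X = braid_perm \<beta>"
  shows "X \<in> generate (braid_group n) (pure_braids n \<union> {\<beta>})"
proof -
  let ?B = "braid_group n"
  interpret group ?B by (rule group_braid_group)
  have "inv\<^bsub>?B\<^esub> \<beta> \<otimes>\<^bsub>?B\<^esub> X \<in> pure_braids n"
    using assms braid_perm_inv(2)[of \<beta>] by (simp add: pure_braids_def braid_perm_mult)
  moreover have "X = \<beta> \<otimes>\<^bsub>?B\<^esub> (inv\<^bsub>?B\<^esub> \<beta> \<otimes>\<^bsub>?B\<^esub> X)"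
    using assms by (simp add: m_assoc[symmetric])
  ultimately show ?thesis
    by (metis Un_iff generate.eng generate.incl singletonI)
qed

lemma (in monoid) bi_orderable_commute_of_square_commute:
  assumes "bi_orderable G" and x: "x \<in> carrier G" and y: "y \<in> carrier G"
    and sq: "x \<otimes> x \<otimes> y = y \<otimes> x \<otimes> x"
  shows "x \<otimes> y = y \<otimes> x"
proof (rule ccontr)
  assume ne: "x \<otimes> y \<noteq> y \<otimes> x"
  obtain r where irrefl: "\<forall>a\<in>carrier G. \<not> r a a"
    and trans: "\<forall>a\<in>carrier G. \<forall>b\<in>carrier G. \<forall>c\<in>carrier G. r a b \<and> r b c \<longrightarrow> r a c"
    and total: "\<forall>a\<in>carrier G. \<forall>b\<in>carrier G. a \<noteq> b \<longrightarrow> r a b \<or> r b a"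
    and mult: "\<forall>a\<in>carrier G. \<forall>b\<in>carrier G. \<forall>c\<in>carrier G.
                 r a b \<longrightarrow> r (c \<otimes> a) (c \<otimes> b) \<and> r (a \<otimes> c) (b \<otimes> c)"
    using assms(1) unfolding bi_orderable_def by blast
  have xyx: "x \<otimes> (y \<otimes> x) = x \<otimes> y \<otimes> x" and xxy: "x \<otimes> (x \<otimes> y) = x \<otimes> x \<otimes> y"
    using x y by (simp_all add: m_assoc)
  have closed: "x \<otimes> x \<otimes> y \<in> carrier G" "x \<otimes> y \<otimes> x \<in> carrier G" "y \<otimes> x \<otimes> x \<in> carrier G"
    using x y by simp_all
  consider "r (x \<otimes> y) (y \<otimes> x)" | "r (y \<otimes> x) (x \<otimes> y)"
    using total ne x y by blast
  then show False
  proof cases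
    case 1
    then have "r (x \<otimes> (x \<otimes> y)) (x \<otimes> (y \<otimes> x))" "r (x \<otimes> y \<otimes> x) (y \<otimes> x \<otimes> x)"
      using mult x y by blast+
    then have "r (x \<otimes> x \<otimes> y) (y \<otimes> x \<otimes> x)"
      unfolding xyx xxy using trans closed by blast
    then show False using irrefl closed by (simp add: sq)
  next
    case 2
    then have "r (x \<otimes> (y \<otimes> x)) (x \<otimes> (x \<otimes> y))" "r (y \<otimes> x \<otimes> x) (x \<otimes> y \<otimes> x)"
      using mult x y by blast+
    then have "r (y \<otimes> x \<otimes> x) (x \<otimes> x \<otimes> y)"
      unfolding xyx xxy using trans closed by blast
    then show False using irrefl closed by (simp add: sq)
  qed
qed

lemma (in group) subgroup_not_bi_orderable:
  assumes "subgroup H G" "x \<in> H" "y \<in> H"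
    and "x \<otimes> x \<otimes> y = y \<otimes> x \<otimes> x" "x \<otimes> y \<noteq> y \<otimes> x"
  shows "\<not> bi_orderable (G\<lparr>carrier := H\<rparr>)"
proof
  assume "bi_orderable (G\<lparr>carrier := H\<rparr>)"
  moreover have "monoid (G\<lparr>carrier := H\<rparr>)"
    using group.is_monoid subgroup.subgroup_is_group[OF assms(1) is_group] by blast
  ultimately have "x \<otimes> y = y \<otimes> x"
    using monoid.bi_orderable_commute_of_square_commute[of "G\<lparr>carrier := H\<rparr>" x y] assms(2-4) by simp
  with assms(5) show False ..
qed

lemma (in group) conj_mult_conj:
  assumes "g \<in> carrier G" "a \<in> carrier G" "b \<in> carrier G"
  shows "(g \<otimes> a \<otimes> inv g) \<otimes> (g \<otimes> b \<otimes> inv g) = g \<otimes> (a \<otimes> b) \<otimes> inv g"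
  using assms by (simp add: m_assoc) (simp add: m_assoc[symmetric])

lemma (in group) conj_eq_conj_iff:
  assumes "g \<in> carrier G" "a \<in> carrier G" "b \<in> carrier G"
  shows "g \<otimes> a \<otimes> inv g = g \<otimes> b \<otimes> inv g \<longleftrightarrow> a = b"
  using assms by simp

definition full_twist_word :: "nat \<Rightarrow> bword" where
  "full_twist_word k = [(k, True), (k + 1, True), (k, True), (k + 1, True), (k, True), (k + 1, True)]"

definition sqrt_full_twist_word :: "nat \<Rightarrow> bword" where
  "sqrt_full_twist_word k = [(k, True), (k + 1, True), (k + 1, True)]"

lemma beq_full_twist_commute:
  assumes "1 \<le> k" "k + 1 \<le> n - 1"
  shows "beq n (full_twist_word k @ [(k + 1, True)]) ((k + 1, True) # full_twist_word k)"
proof -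
  let ?P = "(k, True)" and ?Q = "(k + 1, True)"
  have braid: "beq n [?P, ?Q, ?P] [?Q, ?P, ?Q]"
    using assms by (intro beq_braid) auto
  have "beq n (full_twist_word k @ [?Q]) [?P, ?Q, ?P, ?P, ?Q, ?P, ?Q]"
    using assms unfolding full_twist_word_def
    by (intro beq_in_context[OF beq_sym[OF braid], where a = "[?P, ?Q, ?P]" and c = "[?Q]"]) auto
  also have "beq n [?P, ?Q, ?P, ?P, ?Q, ?P, ?Q] (?Q # full_twist_word k)"
    using assms unfolding full_twist_word_def
    by (intro beq_in_context[OF braid, where a = "[]" and c = "[?P, ?Q, ?P, ?Q]"]) auto
  finally show ?thesis .
qed

lemma beq_sqrt_full_twist_square:
  assumes "1 \<le> k" "k + 1 \<le> n - 1"
  shows "beq n (sqrt_full_twist_word k @ sqrt_full_twist_word k) (full_twist_word k)"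
proof -
  let ?P = "(k, True)" and ?Q = "(k + 1, True)"
  have braid: "beq n [?P, ?Q, ?P] [?Q, ?P, ?Q]"
    using assms by (intro beq_braid) auto
  show ?thesis
    using assms unfolding full_twist_word_def sqrt_full_twist_word_def
    by (intro beq_in_context[OF beq_sym[OF braid], where a = "[?P, ?Q]" and c = "[?Q]"]) auto
qed

lemma beq_sqrt_full_twist_square_commute:
  assumes "1 \<le> k" "k + 1 \<le> n - 1"
  defines "c \<equiv> sqrt_full_twist_word k" and "d \<equiv> [(k + 1, True), (k + 1, True)]"
  shows "beq n (c @ c @ d) (d @ c @ c)"
proof -
  let ?Q = "(k + 1, True)" and ?T = "full_twist_word k"
  have valid: "valid_word n [?Q, ?Q]" "valid_word n ?T"
    using assms(1,2) unfolding full_twist_word_def by auto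
  have square: "beq n (c @ c) ?T"
    unfolding c_def by (rule beq_sqrt_full_twist_square[OF assms(1,2)])
  have "beq n (c @ c @ [?Q, ?Q]) (?T @ [?Q] @ [?Q])"
    using beq_append[OF square beq_refl valid(2,1)] by simp
  also have "beq n (?T @ [?Q] @ [?Q]) ([?Q] @ ?T @ [?Q])"
    using assms(1,2) by (intro beq_in_context[OF beq_full_twist_commute, where a = "[]" and c = "[?Q]"]) auto
  also have "beq n ([?Q] @ ?T @ [?Q]) ([?Q] @ [?Q] @ ?T)"
    using assms(1,2) by (intro beq_in_context[OF beq_full_twist_commute, where a = "[?Q]" and c = "[]"]) auto
  also have "beq n ([?Q] @ [?Q] @ ?T) ([?Q, ?Q] @ c @ c)"
    using beq_append[OF beq_refl beq_sym[OF square] valid(1,2)] by simp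
  finally show ?thesis unfolding d_def by simp
qed

lemma not_beq_sqrt_full_twist_commute:
  fixes k :: nat
  defines "c \<equiv> sqrt_full_twist_word k" and "d \<equiv> [(k + 1, True), (k + 1, True)]"
  shows "\<not> beq n (c @ d) (d @ c)"
proof
  assume "beq n (c @ d) (d @ c)"
  then have "linking_number (c @ d) (k + 1) (k + 2) = linking_number (d @ c) (k + 1) (k + 2)"
    by (simp add: beq_imp_word_perm_linking_number_eq)
  then show False
    unfolding c_def d_def sqrt_full_twist_word_def by (simp add: letter_linking_def)
qed

definition sqrt_full_twist :: "nat \<Rightarrow> nat \<Rightarrow> bword set" where
  "sqrt_full_twist n k = braid_class n (sqrt_full_twist_word k)"

definition sigma_square :: "nat \<Rightarrow> nat \<Rightarrow> bword set" where
  "sigma_square n i = braid_class n [(i, True), (i, True)]"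

lemma sqrt_full_twist_in_carrier:
  "1 \<le> k \<Longrightarrow> k + 1 \<le> n - 1 \<Longrightarrow> sqrt_full_twist n k \<in> carrier (braid_group n)"
  by (simp add: sqrt_full_twist_def sqrt_full_twist_word_def braid_class_in_carrier)

lemma braid_perm_sqrt_full_twist:
  "1 \<le> k \<Longrightarrow> k + 1 \<le> n - 1 \<Longrightarrow> braid_perm (sqrt_full_twist n k) = transpose k (k + 1)"
  by (simp add: sqrt_full_twist_def sqrt_full_twist_word_def braid_perm_class)

lemma sigma_square_in_carrier:
  "1 \<le> i \<Longrightarrow> i \<le> n - 1 \<Longrightarrow> sigma_square n i \<in> carrier (braid_group n)"
  by (simp add: sigma_square_def braid_class_in_carrier)

lemma braid_perm_sigma_square: "1 \<le> i \<Longrightarrow> i \<le> n - 1 \<Longrightarrow> braid_perm (sigma_square n i) = id"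
  by (simp add: sigma_square_def braid_perm_class)

lemma sqrt_full_twist_square_commute_sigma_square:
  assumes "1 \<le> k" "k + 1 \<le> n - 1"
  defines "c \<equiv> sqrt_full_twist n k" and "d \<equiv> sigma_square n (k + 1)"
  shows "c \<otimes>\<^bsub>braid_group n\<^esub> c \<otimes>\<^bsub>braid_group n\<^esub> d = d \<otimes>\<^bsub>braid_group n\<^esub> c \<otimes>\<^bsub>braid_group n\<^esub> c"
  using assms beq_sqrt_full_twist_square_commute[OF assms(1,2)]
  by (simp add: sqrt_full_twist_def sigma_square_def sqrt_full_twist_word_def braid_class_mult
      braid_class_eq_iff)

lemma sqrt_full_twist_not_commute_sigma_square:
  assumes "1 \<le> k" "k + 1 \<le> n - 1"
  defines "c \<equiv> sqrt_full_twist n k" and "d \<equiv> sigma_square n (k + 1)"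
  shows "c \<otimes>\<^bsub>braid_group n\<^esub> d \<noteq> d \<otimes>\<^bsub>braid_group n\<^esub> c"
  using assms not_beq_sqrt_full_twist_commute[where n = n and k = k]
  by (simp add: sqrt_full_twist_def sigma_square_def sqrt_full_twist_word_def braid_class_mult
      braid_class_eq_iff)

fun strand_shift_word :: "nat \<Rightarrow> nat \<Rightarrow> bword" where
  "strand_shift_word i 0 = []"
| "strand_shift_word i (Suc m) = (i + m + 1, True) # strand_shift_word i m"

lemma word_perm_strand_shift_word:
  "word_perm (strand_shift_word i m) i = i" "word_perm (strand_shift_word i m) (i + 1) = i + 1 + m"
  by (induction m) auto

lemma valid_strand_shift_word: "1 \<le> i \<Longrightarrow> i + m \<le> n - 1 \<Longrightarrow> valid_word n (strand_shift_word i m)"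
  by (induction m) auto

lemma is_transposition_conj_adjacent:
  assumes "n \<ge> 3" "is_transposition n p"
  obtains g k where "valid_word n g" "1 \<le> k" "k + 1 \<le> n - 1"
    "p = transpose (word_perm g k) (word_perm g (k + 1))"
proof -
  obtain a b where ab: "a \<in> {1..n}" "b \<in> {1..n}" "a \<noteq> b" "p = transpose a b"
    using assms(2) unfolding is_transposition_def by blast
  define i j where "i = min a b" and "j = max a b"
  have ij: "1 \<le> i" "i < j" "j \<le> n" "p = transpose i j"
    using ab by (auto simp: i_def j_def min_def max_def transpose_commute)
  show thesis
  proof (cases "i \<le> n - 2")
    case True
    let ?g = "strand_shift_word i (j - i - 1)"
    have "valid_word n ?g"
      using True ij by (intro valid_strand_shift_word) auto
    moreover have "word_perm ?g i = i" "word_perm ?g (i + 1) = j"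
      using word_perm_strand_shift_word[of i "j - i - 1"] ij by auto
    ultimately show thesis
      using True ij by (intro that[of ?g i]) auto
  next
    case False
    let ?m = "n - 3"
    have n: "n = Suc (Suc (Suc ?m))"
      using assms(1) by simp
    then have "i = Suc (Suc ?m)" "j = Suc (Suc (Suc ?m))"
      using ij(1-3) False by linarith+
    then have "p = transpose (Suc (Suc ?m)) (Suc (Suc (Suc ?m)))"
      using ij(4) by simp
    then show thesis
      using n by (intro that[of "[(Suc ?m, True), (Suc (Suc ?m), True)]" "Suc ?m"]) auto
  qed
qed

theorem mainTheorem8:
  fixes n :: nat and \<beta> :: "bword set"
  assumes "n \<ge> 3"
    and "\<beta> \<in> carrier (braid_group n)"
    and "is_transposition n (braid_perm \<beta>)"
  shows "\<not> bi_orderable ((braid_group n)\<lparr>carrier := generate (braid_group n) (pure_braids n \<union> {\<beta>})\<rparr>)"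
proof -
  let ?B = "braid_group n"
  interpret B: group ?B by (rule group_braid_group)
  obtain g k where g: "valid_word n g" and k: "1 \<le> k" "k + 1 \<le> n - 1"
    and perm: "braid_perm \<beta> = transpose (word_perm g k) (word_perm g (k + 1))"
    by (rule is_transposition_conj_adjacent[OF assms(1,3)])
  define \<gamma> c d where "\<gamma> = braid_class n g" and "c = sqrt_full_twist n k" and "d = sigma_square n (k + 1)"
  have carrier: "\<gamma> \<in> carrier ?B" "c \<in> carrier ?B" "d \<in> carrier ?B"
    using g k by (simp_all add: \<gamma>_def c_def d_def braid_class_in_carrier sqrt_full_twist_in_carrier
        sigma_square_in_carrier)
  define x y where "x = \<gamma> \<otimes>\<^bsub>?B\<^esub> c \<otimes>\<^bsub>?B\<^esub> inv\<^bsub>?B\<^esub> \<gamma>" and "y = \<gamma> \<otimes>\<^bsub>?B\<^esub> d \<otimes>\<^bsub>?B\<^esub> inv\<^bsub>?B\<^esub> \<gamma>"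
  have "braid_perm x = braid_perm \<beta>"
    using braid_perm_conj_transpose[OF carrier(1,2)] g k
    by (simp add: x_def \<gamma>_def c_def perm braid_perm_class braid_perm_sqrt_full_twist)
  then have "x \<in> generate ?B (pure_braids n \<union> {\<beta>})"
    using assms(2) carrier by (intro mem_generate_of_braid_perm_eq) (simp_all add: x_def)
  moreover have "y \<in> generate ?B (pure_braids n \<union> {\<beta>})"
    using carrier braid_perm_conj_id[OF carrier(1,3)] k
    by (intro generate.incl) (simp add: y_def d_def pure_braids_def braid_perm_sigma_square)
  moreover have "x \<otimes>\<^bsub>?B\<^esub> x \<otimes>\<^bsub>?B\<^esub> y = y \<otimes>\<^bsub>?B\<^esub> x \<otimes>\<^bsub>?B\<^esub> x" "x \<otimes>\<^bsub>?B\<^esub> y \<noteq> y \<otimes>\<^bsub>?B\<^esub> x"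
    unfolding x_def y_def
    by (simp_all only: B.conj_mult_conj B.conj_eq_conj_iff B.m_closed carrier not_False_eq_True
        sqrt_full_twist_square_commute_sigma_square[OF k, folded c_def d_def]
        sqrt_full_twist_not_commute_sigma_square[OF k, folded c_def d_def])
  ultimately show ?thesis
    using assms(2) by (intro B.subgroup_not_bi_orderable B.generate_is_subgroup) (auto simp: pure_braids_def)
qed

end
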